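(* Let $t>0$ and $k>1$ be constants, and let $p_0,p_1,p_2,p_3$ be real numbers with $0<p_i<1$ and $\sum_{i=0}^{3}p_i=1$. Define $T(n,r)$ for real $n\ge 0$ and integers $r\ge 0$ by $$T(n,r)=\begin{cases}1 & \text{if } n\le t k^r,\\ 1+\sum_{i=0}^{3} T\big(p_i(n-tk^r),\,r+1\big) & \text{if } n> t k^r.\end{cases}$$ Then, as $N\to\infty$, $T(N,0)\in\Theta(N^s)$, where $s$ is the real solution of $\sum_{i=0}^{3}p_i^s=k^s$.
   Context: $T(N,0)$ is the asymptotic space (number of counters) used by a DN-tree with parameters $k$ and $t$ after recording $N$ extent accesses: a tree vertex at level $r$ saturates at threshold $tk^r$, after which further accesses are distributed among its four children with probabilities $p_0,\dots,p_3$ (an R-MAT-type distribution). The parameters $t,k,p_i$ are fixed as $N\to\infty$. *)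

theory Defs
  imports Complex_Main "HOL-Library.Landau_Symbols"
begin

definition valid_params :: "real \<Rightarrow> real \<Rightarrow> (nat \<Rightarrow> real) \<Rightarrow> bool" where
  "valid_params t k p \<longleftrightarrow> t > 0 \<and> k > 1 \<and> (\<forall>i<4. 0 < p i \<and> p i < 1)"

text \<open>The space recurrence T(n,r); the guard on the parameters only serves to make the
  function total (termination), it is vacuous under the theorem's hypotheses.\<close>
function T :: "real \<Rightarrow> real \<Rightarrow> (nat \<Rightarrow> real) \<Rightarrow> real \<Rightarrow> nat \<Rightarrow> real" where
  "T t k p n r =
     (if n \<le> t * k ^ r \<or> \<not> valid_params t k p then 1
      else 1 + T t k p (p 0 * (n - t * k ^ r)) (Suc r)
             + T t k p (p 1 * (n - t * k ^ r)) (Suc r)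
             + T t k p (p 2 * (n - t * k ^ r)) (Suc r)
             + T t k p (p 3 * (n - t * k ^ r)) (Suc r))"
  by pat_completeness auto

lemma T_term_aux:
  assumes v: "valid_params t k p" and i: "i < 4" and n: "\<not> n \<le> t * k ^ r"
  shows "nat \<lceil>p i * (n - t * k ^ r) / (t * k ^ Suc r)\<rceil> < nat \<lceil>n / (t * k ^ r)\<rceil>"
proof -
  from v have t: "t > 0" and k: "k > 1" and p0: "0 < p i" and p1: "p i < 1"
    using i by (auto simp: valid_params_def)
  define c where "c = t * k ^ r"
  have c: "c > 0" using t k by (simp add: c_def)
  define m where "m = n / c"
  have m: "m > 1" using n c by (simp add: m_def c_def[symmetric] less_divide_eq)
  have n_eq: "n - t * k ^ r = c * (m - 1)"
    using c by (simp add: m_def c_def[symmetric] right_diff_distrib)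
  have ck: "t * k ^ Suc r = c * k" by (simp add: c_def)
  have eq: "p i * (n - t * k ^ r) / (t * k ^ Suc r) = p i * (m - 1) / k"
    unfolding n_eq ck using c by simp
  have "p i * (m - 1) / k < m - 1"
  proof -
    have "p i * (m - 1) < m - 1" using p1 m by simp
    also have "m - 1 \<le> k * (m - 1)" using k m by simp
    finally show ?thesis using k by (simp add: field_simps)
  qed
  hence "\<lceil>p i * (m - 1) / k\<rceil> \<le> \<lceil>m - 1\<rceil>" by (intro ceiling_mono) simp
  hence "\<lceil>p i * (m - 1) / k\<rceil> < \<lceil>m\<rceil>" by simp
  moreover have "p i * (m - 1) / k > 0" using p0 m k by simp
  hence "\<lceil>p i * (m - 1) / k\<rceil> \<ge> 0" by linarith
  ultimately have "\<lceil>p i * (m - 1) / k\<rceil> < \<lceil>m\<rceil>" "0 \<le> \<lceil>p i * (m - 1) / k\<rceil>" by auto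
  hence "nat \<lceil>p i * (m - 1) / k\<rceil> < nat \<lceil>m\<rceil>" by linarith
  thus ?thesis unfolding eq m_def c_def .
qed

termination
  apply (relation "measure (\<lambda>(t, k, p, n, r). nat \<lceil>n / (t * k ^ r)\<rceil>)")
  apply (simp_all only: wf_measure in_measure prod.case de_Morgan_disj not_not)
  apply (rule T_term_aux; simp)+
  done

end

theory Submission
  imports Defs
begin

text \<open>Measure sizes in units of the threshold, \<open>m = n / (t k^r)\<close>. A saturated vertex of
  scaled size \<open>m > 1\<close> has four children of scaled sizes \<open>(p\<^sub>i / k)(m - 1)\<close>, and the
  defining equation of \<open>s\<close> says exactly that the weights \<open>(p\<^sub>i / k)\<^sup>s\<close> sum to 1. Since
  \<open>0 < s \<le> 1\<close>, the function \<open>m\<^sup>s\<close> is subadditive, so \<open>m\<^sup>s \<le> 1 + \<Sum> (p\<^sub>i / k)\<^sup>s (m - 1)\<^sup>s\<close>,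
  and induction along the recursion gives \<open>T \<ge> m\<^sup>s\<close>. Conversely \<open>C m\<^sup>s - 1/3\<close> is an upper
  bound for all scaled sizes above a fixed cutoff, by the same induction.\<close>

lemma powr_add_le_add_powr:
  fixes a b s :: real
  assumes "a \<ge> 0" "b \<ge> 0" "0 < s" "s \<le> 1"
  shows "(a + b) powr s \<le> a powr s + b powr s"
proof (cases "a + b = 0")
  case True
  then show ?thesis using assms by auto
next
  case False
  then have ab: "a + b > 0" using assms by linarith
  have frac: "x / (a + b) \<le> (x / (a + b)) powr s" if "0 \<le> x" "x \<le> a + b" for x
  proof (cases "x = 0")
    case False
    then have "0 < x / (a + b)" "x / (a + b) \<le> 1" using that ab by auto
    then have "(x / (a + b)) powr 1 \<le> (x / (a + b)) powr s"
      using assms by (intro powr_mono') auto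
    then show ?thesis using \<open>0 < x / (a + b)\<close> that ab by simp
  qed simp
  have "1 = a / (a + b) + b / (a + b)" using ab by (simp add: add_divide_distrib[symmetric])
  also have "\<dots> \<le> (a / (a + b)) powr s + (b / (a + b)) powr s"
    using frac[of a] frac[of b] assms by auto
  also have "\<dots> = (a powr s + b powr s) / (a + b) powr s"
    using assms ab by (simp add: powr_divide add_divide_distrib)
  finally show ?thesis using ab by (simp add: field_simps)
qed

lemma sum_powr_divide_eq_1:
  fixes k s :: real
  assumes "k > 0" and "\<forall>i\<in>A. p i \<ge> 0" and "(\<Sum>i\<in>A. p i powr s) = k powr s"
  shows "(\<Sum>i\<in>A. (p i / k) powr s) = 1"
proof -
  have "(\<Sum>i\<in>A. (p i / k) powr s) = (\<Sum>i\<in>A. p i powr s) / k powr s"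
    using assms(1,2) by (simp add: powr_divide sum_divide_distrib)
  then show ?thesis using assms(1,3) by simp
qed

lemma sum_powr_eq_powr_imp_pos:
  fixes k s :: real
  assumes "finite A" and "card A \<ge> 2" and "k > 1"
    and "\<forall>i\<in>A. 0 < p i \<and> p i \<le> 1" and "(\<Sum>i\<in>A. p i powr s) = k powr s"
  shows "s > 0"
proof (rule ccontr)
  assume "\<not> s > 0"
  then have "1 \<le> p i powr s" if "i \<in> A" for i
    using assms(4) that powr_mono'[of s 0 "p i"] by fastforce
  then have "real (card A) \<le> (\<Sum>i\<in>A. p i powr s)"
    using sum_mono[of A "\<lambda>_. 1 :: real"] by simp
  moreover have "k powr s \<le> k powr 0"
    using assms(3) \<open>\<not> s > 0\<close> by (intro powr_mono) auto
  ultimately show False using assms(2,3,5) by simp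
qed

lemma sum_powr_eq_powr_imp_le_1:
  fixes k s :: real
  assumes "k > 1" and "\<forall>i\<in>A. 0 < p i \<and> p i \<le> 1" and "sum p A = 1"
    and "(\<Sum>i\<in>A. p i powr s) = k powr s"
  shows "s \<le> 1"
proof (rule ccontr)
  assume "\<not> s \<le> 1"
  then have "p i powr s \<le> p i" if "i \<in> A" for i
    using assms(2) that powr_mono'[of 1 s "p i"] by fastforce
  then have "(\<Sum>i\<in>A. p i powr s) \<le> 1"
    using sum_mono[of A "\<lambda>i. p i powr s" p] assms(3) by simp
  moreover have "k powr 1 < k powr s"
    using assms(1) \<open>\<not> s \<le> 1\<close> by (intro powr_less_mono) auto
  ultimately show False using assms(1,4) by simp
qed

declare T.simps[simp del]

lemma valid_paramsD:
  assumes "valid_params t k p"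
  shows "t > 0" and "k > 1" and "i < 4 \<Longrightarrow> 0 < p i" and "i < 4 \<Longrightarrow> p i < 1"
  using assms by (auto simp: valid_params_def)

lemma T_below_threshold:
  assumes "n \<le> t * k ^ r"
  shows "T t k p n r = 1"
  using assms by (subst T.simps) simp

lemma T_above_threshold:
  assumes "valid_params t k p" and "\<not> n \<le> t * k ^ r"
  shows "T t k p n r = 1 + (\<Sum>i<4. T t k p (p i * (n - t * k ^ r)) (Suc r))"
  using assms by (subst T.simps) (simp add: eval_nat_numeral add.assoc)

lemma T_induct [consumes 1, case_names below above]:
  assumes "valid_params t k p"
    and below: "\<And>n r. n \<le> t * k ^ r \<Longrightarrow> P n r"
    and above: "\<And>n r. \<not> n \<le> t * k ^ r \<Longrightarrow>
      (\<And>i. i < 4 \<Longrightarrow> P (p i * (n - t * k ^ r)) (Suc r)) \<Longrightarrow> P n r"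
  shows "P n r"
proof -
  have "t' = t \<and> k' = k \<and> p' = p \<longrightarrow> P n r" for t' k' p'
  proof (induction t' k' p' n r rule: T.induct)
    case (1 t' k' p' n r)
    show ?case
    proof (intro impI, elim conjE)
      assume params: "t' = t" "k' = k" "p' = p"
      show "P n r"
      proof (cases "n \<le> t * k ^ r")
        case True
        then show ?thesis by (rule below)
      next
        case False
        have "P (p i * (n - t * k ^ r)) (Suc r)" if "i < 4" for i
          using that 1 False assms(1) params by (auto simp: less_Suc_eq numeral_eq_Suc)
        with False show ?thesis by (rule above)
      qed
    qed
  qed
  then show ?thesis by blast
qed

lemma child_size_scaled:
  fixes t k :: real
  assumes "t > 0" and "k > 0"
  shows "q * (n - t * k ^ r) / (t * k ^ Suc r) = q / k * (n / (t * k ^ r) - 1)"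
  using assms by (simp add: field_simps)

lemma T_ge_scaled_powr:
  assumes v: "valid_params t k p" and s: "0 < s" "s \<le> 1"
    and w: "(\<Sum>i<4. (p i / k) powr s) = 1"
    and "n \<ge> 0"
  shows "(n / (t * k ^ r)) powr s \<le> T t k p n r"
  using v \<open>n \<ge> 0\<close>
proof (induction n r rule: T_induct)
  case (below n r)
  have "0 < t * k ^ r" using valid_paramsD(1,2)[OF v] by simp
  with below have "0 \<le> n / (t * k ^ r)" "n / (t * k ^ r) \<le> 1" by auto
  then have "(n / (t * k ^ r)) powr s \<le> 1"
    using s powr_mono2[of s "n / (t * k ^ r)" 1] by simp
  then show ?case using T_below_threshold[OF below(1)] by simp
next
  case (above n r)
  note t = valid_paramsD(1)[OF v] and k = valid_paramsD(2)[OF v]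
    and p = valid_paramsD(3,4)[OF v]
  define m where "m = n / (t * k ^ r)"
  have m: "m > 1" using above(1) t k by (simp add: m_def not_le)
  have child: "(p i / k) powr s * (m - 1) powr s \<le> T t k p (p i * (n - t * k ^ r)) (Suc r)"
    if i: "i < 4" for i
  proof -
    have "p i * (n - t * k ^ r) / (t * k ^ Suc r) = p i / k * (m - 1)"
      unfolding m_def using t k by (intro child_size_scaled) auto
    moreover have "0 \<le> p i * (n - t * k ^ r)" using p[OF i] above(1) by simp
    ultimately have "(p i / k * (m - 1)) powr s \<le> T t k p (p i * (n - t * k ^ r)) (Suc r)"
      using above(2)[OF i] by simp
    moreover have "(p i / k * (m - 1)) powr s = (p i / k) powr s * (m - 1) powr s"
      using p[OF i] k m by (subst powr_mult) auto
    ultimately show ?thesis by simp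
  qed
  have "m powr s \<le> 1 + (m - 1) powr s"
    using powr_add_le_add_powr[of 1 "m - 1" s] s m by simp
  also have "\<dots> = 1 + (\<Sum>i<4. (p i / k) powr s * (m - 1) powr s)"
    using w by (simp add: sum_distrib_right[symmetric])
  also have "\<dots> \<le> T t k p n r"
    using sum_mono[of "{..<4}", OF child] T_above_threshold[OF v above(1)] by simp
  finally show ?case by (simp add: m_def)
qed

lemma T_le_5:
  assumes v: "valid_params t k p" and n: "n \<le> 2 * (t * k ^ r)"
  shows "T t k p n r \<le> 5"
proof (cases "n \<le> t * k ^ r")
  case True
  then show ?thesis by (simp add: T_below_threshold)
next
  case False
  note t = valid_paramsD(1)[OF v] and k = valid_paramsD(2)[OF v]
    and p = valid_paramsD(3,4)[OF v]
  have "T t k p (p i * (n - t * k ^ r)) (Suc r) = 1" if i: "i < 4" for i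
  proof (rule T_below_threshold)
    have "p i * (n - t * k ^ r) \<le> 1 * (t * k ^ r)"
      using p[OF i] n False by (intro mult_mono) auto
    also have "\<dots> \<le> t * k ^ Suc r" using t k by simp
    finally show "p i * (n - t * k ^ r) \<le> t * k ^ Suc r" .
  qed
  then show ?thesis using T_above_threshold[OF v False] by simp
qed

lemma T_le_scaled_powr_base:
  assumes "valid_params t k p" and "0 \<le> s" and "0 < l"
    and "l \<le> n / (t * k ^ r)" and "n \<le> 2 * (t * k ^ r)"
  shows "T t k p n r \<le> 6 * (n / (t * k ^ r) / l) powr s - 1/3"
proof -
  have "1 \<le> n / (t * k ^ r) / l" using assms(3,4) by (simp only: le_divide_eq_1_pos)
  then have "1 \<le> (n / (t * k ^ r) / l) powr s" using assms(2) by (intro ge_one_powr_ge_zero)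
  with T_le_5[OF assms(1,5)] show ?thesis by linarith
qed

text \<open>Each vertex costs 1, and its four children each contribute a slack of \<open>1/3\<close>, which
  absorbs that cost. The cutoff \<open>l\<close> is needed because \<open>T = 1\<close> at tiny sizes; every child of a
  vertex of scaled size above 2 has scaled size at least \<open>l\<close>.\<close>

lemma T_le_scaled_powr:
  assumes v: "valid_params t k p" and s: "0 < s"
    and w: "(\<Sum>i<4. (p i / k) powr s) = 1"
    and l: "0 < l" "\<forall>i<4. l \<le> p i / k"
    and "l \<le> n / (t * k ^ r)"
  shows "T t k p n r \<le> 6 * (n / (t * k ^ r) / l) powr s - 1/3"
proof -
  note t = valid_paramsD(1)[OF v] and k = valid_paramsD(2)[OF v]
    and p = valid_paramsD(3,4)[OF v]
  show ?thesis
    using v \<open>l \<le> n / (t * k ^ r)\<close>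
  proof (induction n r rule: T_induct)
    case (below n r)
    have "0 < t * k ^ r" using t k by simp
    with below show ?case using T_le_scaled_powr_base[OF v _ l(1)] s by simp
  next
    case (above n r)
    define m where "m = n / (t * k ^ r)"
    show ?case
    proof (cases "m \<le> 2")
      case True
      have "0 < t * k ^ r" using t k by simp
      with True have "n \<le> 2 * (t * k ^ r)" by (simp add: m_def divide_le_eq)
      with above(3) show ?thesis using T_le_scaled_powr_base[OF v _ l(1)] s by simp
    next
      case False
      have child: "T t k p (p i * (n - t * k ^ r)) (Suc r)
          \<le> 6 * ((p i / k) powr s * ((m - 1) / l) powr s) - 1/3" if i: "i < 4" for i
      proof -
        have "l \<le> p i / k * 1" using l(2) i by simp
        also have "\<dots> \<le> p i / k * (m - 1)"
          using p[OF i] k False by (intro mult_left_mono) auto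
        finally have "l \<le> p i / k * (m - 1)" .
        moreover have "p i * (n - t * k ^ r) / (t * k ^ Suc r) = p i / k * (m - 1)"
          unfolding m_def using t k by (intro child_size_scaled) auto
        ultimately have "T t k p (p i * (n - t * k ^ r)) (Suc r) \<le> 6 * (p i / k * (m - 1) / l) powr s - 1/3"
          using above(2)[OF i] by simp
        moreover have "(p i / k * ((m - 1) / l)) powr s = (p i / k) powr s * ((m - 1) / l) powr s"
          using p[OF i] k l(1) False by (subst powr_mult) auto
        ultimately show ?thesis by (simp add: mult.assoc)
      qed
      have "T t k p n r \<le> 1 + (\<Sum>i<4. 6 * ((p i / k) powr s * ((m - 1) / l) powr s) - 1/3)"
        using sum_mono[of "{..<4}", OF child] T_above_threshold[OF v above(1)] by simp
      also have "\<dots> = 6 * ((m - 1) / l) powr s - 1/3"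
        using w by (simp add: sum_subtractf sum_distrib_left[symmetric] sum_distrib_right[symmetric])
      also have "\<dots> \<le> 6 * (m / l) powr s - 1/3"
        using powr_mono2[of s "(m - 1) / l" "m / l"] False s l(1) by (simp add: divide_right_mono)
      finally show ?thesis by (simp add: m_def)
    qed
  qed
qed

lemma T_root_bounds:
  assumes v: "valid_params t k p" and s: "0 < s" "s \<le> 1"
    and w: "(\<Sum>i<4. (p i / k) powr s) = 1"
    and l: "0 < l" "\<forall>i<4. l \<le> p i / k"
    and N: "t * l \<le> N"
  shows "N powr s / t powr s \<le> T t k p N 0"
    and "T t k p N 0 \<le> 6 / (t * l) powr s * N powr s"
proof -
  note t = valid_paramsD(1)[OF v]
  have N_pos: "0 < N" using N mult_pos_pos[OF t l(1)] by linarith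
  show "N powr s / t powr s \<le> T t k p N 0"
    using T_ge_scaled_powr[OF v s w, of N 0] N_pos t by (simp add: powr_divide)
  have "l \<le> N / t" using N t by (simp add: pos_le_divide_eq mult.commute)
  then have "T t k p N 0 \<le> 6 * (N / t / l) powr s - 1/3"
    using T_le_scaled_powr[OF v s(1) w l, of N 0] by simp
  also have "\<dots> \<le> 6 / (t * l) powr s * N powr s"
    using N_pos t l(1) by (simp add: powr_divide)
  finally show "T t k p N 0 \<le> 6 / (t * l) powr s * N powr s" .
qed

theorem theorem1:
  fixes t k s :: real and p :: "nat \<Rightarrow> real"
  assumes "t > 0" and "k > 1"
    and "\<forall>i<4. 0 < p i \<and> p i < 1"
    and "(\<Sum>i<4. p i) = 1"
    and "(\<Sum>i<4. p i powr s) = k powr s"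
  shows "(\<lambda>N. T t k p N 0) \<in> \<Theta>[at_top](\<lambda>N. N powr s)"
proof -
  have v: "valid_params t k p" using assms(1-3) by (simp add: valid_params_def)
  have p: "\<forall>i\<in>{..<4}. 0 < p i \<and> p i \<le> 1" using assms(3) by auto
  have s: "0 < s" "s \<le> 1"
    using sum_powr_eq_powr_imp_pos[OF _ _ assms(2) p assms(5)]
      sum_powr_eq_powr_imp_le_1[OF assms(2) p assms(4,5)] by simp_all
  have w: "(\<Sum>i<4. (p i / k) powr s) = 1"
    using assms(2,3,5) by (intro sum_powr_divide_eq_1) auto
  define l where "l = Min ((\<lambda>i. p i / k) ` {..<4})"
  have "{..<4::nat} \<noteq> {}" by (metis emptyE lessThan_iff zero_less_numeral)
  then have l: "0 < l" "\<forall>i<4. l \<le> p i / k"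
    unfolding l_def using assms(2,3) by (auto simp: Min_gr_iff)
  have "\<forall>\<^sub>F N in at_top. 1 / t powr s * norm (N powr s) \<le> norm (T t k p N 0)
      \<and> norm (T t k p N 0) \<le> 6 / (t * l) powr s * norm (N powr s)"
    using eventually_ge_at_top[of "t * l"]
  proof eventually_elim
    case (elim N)
    note bounds = T_root_bounds[OF v s w l elim]
    moreover have "0 \<le> T t k p N 0" by (rule order_trans[OF _ bounds(1)]) simp
    ultimately show ?case by simp
  qed
  then show ?thesis
    using assms(1) l(1) by (intro bigthetaI'[of "1 / t powr s" "6 / (t * l) powr s"]) auto
qed

end
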